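(* For all $n\ge0$ and $m>nt$, \[ \mathcal{L}^{(t)}_H\big(H^{(t)}_m(x)H^{(t)}_n(x)\big)=0 \quad\text{and}\quad \mathcal{L}^{(t)}_H\big(H^{(t)}_{nt}(x)H^{(t)}_n(x)\big)=\Big(\frac{t+1}{2}\Big)^{n}(nt)!. \]
   Context: Fix an integer $t\ge1$. A $t$-path in $K_n$ is a subgraph isomorphic to a path with $t$ edges. $H^{(t)}_n(x)=\sum_F(-1)^{|F|}x^{\,n-(t+1)|F|}$ over all families $F$ of pairwise vertex-disjoint $t$-paths in $K_n$ ($H^{(t)}_0=1$). Let $\mu^{(t)}_n$ be the number of coverings of all vertices of $K_n$ by pairwise vertex-disjoint $t$-paths ($\mu^{(t)}_0=1$), and let $\mathcal{L}^{(t)}_H$ be the linear functional with $\mathcal{L}^{(t)}_H(x^n)=\mu^{(t)}_n$. *)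

theory Defs
  imports Main "HOL-Computational_Algebra.Polynomial"
begin

text \<open>The complete graph K_n has vertex set {0..<n}; an edge is a 2-element set of vertices.
  A t-path is identified with its edge set: the edges {f i, f (i+1)} (i < t) for an
  injective vertex sequence f 0, ..., f t.\<close>

definition tpaths :: "nat \<Rightarrow> nat \<Rightarrow> nat set set set" where
  "tpaths t n = {P. \<exists>f. inj_on f {0..t} \<and> f ` {0..t} \<subseteq> {0..<n}
                      \<and> P = (\<lambda>i. {f i, f (Suc i)}) ` {0..<t}}"

definition pverts :: "nat set set \<Rightarrow> nat set" where
  "pverts P = \<Union>P"

definition disj_families :: "nat \<Rightarrow> nat \<Rightarrow> nat set set set set" where
  "disj_families t n = {F. F \<subseteq> tpaths t n \<and>
      (\<forall>P\<in>F. \<forall>Q\<in>F. P \<noteq> Q \<longrightarrow> pverts P \<inter> pverts Q = {})}"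

definition Hpoly :: "nat \<Rightarrow> nat \<Rightarrow> real poly" where
  "Hpoly t n = (\<Sum>F\<in>disj_families t n. monom ((-1) ^ card F) (n - (t + 1) * card F))"

definition mu :: "nat \<Rightarrow> nat \<Rightarrow> nat" where
  "mu t n = card {F \<in> disj_families t n. (\<Union>P\<in>F. pverts P) = {0..<n}}"

definition LH :: "nat \<Rightarrow> real poly \<Rightarrow> real" where
  "LH t p = (\<Sum>i\<le>degree p. coeff p i * real (mu t i))"

end

theory Submission
  imports Defs "HOL-Library.Disjoint_Sets" "HOL-Combinatorics.Multiset_Permutations"
begin

(* Both H_n and mu t n depend only on the number of vertices, so for disjoint finite
   vertex sets A, B the value L (H_|A| * H_|B|) is an alternating double sum over families F
   in A and G in B of the number of covers of the remaining vertices.  A sign-reversing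
   inclusion-exclusion argument collapses this sum to the number of "crossing" covers of
   A \<union> B, in which no path lies inside A or inside B.  Counting crossing covers finishes the
   proof: there are none if |A| > t|B|, and if |A| = t|B| every path meets B in exactly one
   vertex, so such covers are counted recursively by removing the path through a fixed
   vertex of B, giving ((t+1)/2)^|B| * (t|B|)!. *)

section \<open>Vertex lists and their edge sets\<close>

fun path_edges :: "nat list \<Rightarrow> nat set set" where
  "path_edges (x # y # zs) = insert {x, y} (path_edges (y # zs))"
| "path_edges _ = {}"

lemma path_edges_snoc: "xs \<noteq> [] \<Longrightarrow> path_edges (xs @ [y]) = insert {last xs, y} (path_edges xs)"
  by (induction xs rule: path_edges.induct) (auto simp: insert_commute)

lemma path_edges_rev: "path_edges (rev xs) = path_edges xs"
proof (induction xs)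
  case (Cons x xs)
  show ?case
  proof (cases xs)
    case (Cons y ys)
    have "path_edges (rev (x # xs)) = path_edges (rev xs @ [x])" by simp
    also have "\<dots> = insert {last (rev xs), x} (path_edges (rev xs))"
      by (rule path_edges_snoc) (simp add: Cons)
    also have "\<dots> = insert {x, y} (path_edges xs)"
      using Cons.IH by (simp add: Cons last_rev insert_commute)
    finally show ?thesis by (simp add: Cons)
  qed simp
qed simp

lemma path_edges_empty_iff: "path_edges xs = {} \<longleftrightarrow> length xs < 2"
  by (induction xs rule: path_edges.induct) auto

lemma Union_path_edges_subset: "\<Union>(path_edges xs) \<subseteq> set xs"
  by (induction xs rule: path_edges.induct) auto

lemma Union_path_edges: "length xs \<ge> 2 \<Longrightarrow> \<Union>(path_edges xs) = set xs"
proof (induction xs rule: path_edges.induct)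
  case (1 x y zs)
  then show ?case by (cases zs) auto
qed auto

lemma path_edges_map: "path_edges (map h xs) = (\<lambda>e. h ` e) ` path_edges xs"
  by (induction xs rule: path_edges.induct) auto

lemma path_edges_upt: "(\<lambda>i. {f i, f (Suc i)}) ` {0..<t} = path_edges (map f [0..<Suc t])"
proof (induction t)
  case (Suc t)
  have "map f [0..<Suc (Suc t)] = map f [0..<Suc t] @ [f (Suc t)]" by simp
  then have "path_edges (map f [0..<Suc (Suc t)]) = insert {f t, f (Suc t)} (path_edges (map f [0..<Suc t]))"
    by (simp add: path_edges_snoc last_map del: upt_Suc)
  moreover have "{0..<Suc t} = insert t {0..<t}" by auto
  ultimately show ?case using Suc by simp
qed simp

lemma tpaths_conv:
  "tpaths t n = {path_edges xs | xs. distinct xs \<and> length xs = Suc t \<and> set xs \<subseteq> {0..<n}}"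
proof (intro set_eqI iffI)
  fix P assume "P \<in> tpaths t n"
  then obtain f where f: "inj_on f {0..t}" "f ` {0..t} \<subseteq> {0..<n}"
    "P = (\<lambda>i. {f i, f (Suc i)}) ` {0..<t}" unfolding tpaths_def by auto
  have "{0..t} = set [0..<Suc t]" by auto
  then show "P \<in> {path_edges xs | xs. distinct xs \<and> length xs = Suc t \<and> set xs \<subseteq> {0..<n}}"
    using f by (intro CollectI exI[of _ "map f [0..<Suc t]"]) (auto simp: path_edges_upt distinct_map)
next
  fix P assume "P \<in> {path_edges xs | xs. distinct xs \<and> length xs = Suc t \<and> set xs \<subseteq> {0..<n}}"
  then obtain xs where xs: "distinct xs" "length xs = Suc t" "set xs \<subseteq> {0..<n}" "P = path_edges xs"
    by auto
  have "map ((!) xs) [0..<Suc t] = xs" using xs(2) by (metis map_nth)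
  moreover have "inj_on ((!) xs) {0..t}" using xs(1,2) by (auto simp: inj_on_def nth_eq_iff_index_eq)
  moreover have "(!) xs ` {0..t} = set xs" using xs(2) by (auto simp: set_conv_nth image_def)
  ultimately show "P \<in> tpaths t n" unfolding tpaths_def using xs
    by (intro CollectI exI[of _ "(!) xs"]) (simp add: path_edges_upt del: upt_Suc)
qed

text \<open>An end vertex of a path lies on exactly one edge; an interior vertex lies on two.
  This distinguishes the ends and yields that the edge set determines the vertex list up
  to reversal.\<close>
lemma path_edges_at_start:
  assumes "distinct (x # y # zs)"
  shows "{e \<in> path_edges (x # y # zs). x \<in> e} = {{x, y}}"
  using assms Union_path_edges_subset[of "y # zs"] by auto

lemma path_edges_at_interior:
  "distinct ys \<Longrightarrow> x \<in> set ys \<Longrightarrow> x \<noteq> hd ys \<Longrightarrow> x \<noteq> last ys \<Longrightarrow>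
   \<exists>e1 e2. e1 \<noteq> e2 \<and> e1 \<in> path_edges ys \<and> e2 \<in> path_edges ys \<and> x \<in> e1 \<and> x \<in> e2"
proof (induction ys rule: path_edges.induct)
  case (1 a b zs)
  show ?case
  proof (cases "x = b")
    case True
    then obtain c zs' where zs: "zs = c # zs'" using 1 by (cases zs) auto
    have "{a, b} \<noteq> {b, c}" using 1(2) zs by (auto simp: doubleton_eq_iff)
    then show ?thesis using True zs by (intro exI[of _ "{a,b}"] exI[of _ "{b,c}"]) auto
  next
    case False
    then show ?thesis using 1 by fastforce
  qed
qed auto

lemma path_edges_inj_start:
  "distinct xs \<Longrightarrow> distinct ys \<Longrightarrow> 2 \<le> length xs \<Longrightarrow> path_edges xs = path_edges ys \<Longrightarrow>
   hd ys = hd xs \<Longrightarrow> ys = xs"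
proof (induction xs arbitrary: ys rule: path_edges.induct)
  case (1 x y zs)
  have "2 \<le> length ys" using 1(5) path_edges_empty_iff[of ys] by fastforce
  then obtain y' zs' where ys: "ys = x # y' # zs'" using 1(6) by (cases ys rule: path_edges.cases) auto
  have "{{x, y}} = {e \<in> path_edges ys. x \<in> e}"
    unfolding 1(5)[symmetric] by (rule path_edges_at_start[OF 1(2), symmetric])
  also have "\<dots> = {{x, y'}}" using path_edges_at_start[of x y' zs'] 1(3) ys by simp
  finally have y': "y' = y" using 1(2) by (auto simp: doubleton_eq_iff)
  have "{x, y} \<notin> path_edges (y # zs)" "{x, y} \<notin> path_edges (y # zs')"
    using 1(2,3) ys y' Union_path_edges_subset[of "y # zs"] Union_path_edges_subset[of "y # zs'"]
    by auto
  then have tails: "path_edges (y # zs) = path_edges (y # zs')"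
    using 1(5) ys y' by (metis insert_ident path_edges.simps(1))
  show ?case
  proof (cases zs)
    case Nil
    then show ?thesis using tails ys y' path_edges_empty_iff[of "y # zs'"] by auto
  next
    case (Cons c cs)
    then show ?thesis using 1(1)[of "y # zs'"] 1(2,3) ys y' tails by simp
  qed
qed auto

lemma path_edges_inj:
  assumes xs: "distinct xs" "2 \<le> length xs" and ys: "distinct ys"
    and eq: "path_edges xs = path_edges ys"
  shows "ys = xs \<or> ys = rev xs"
proof -
  obtain x y zs where xs': "xs = x # y # zs" using xs(2) by (cases xs rule: path_edges.cases) auto
  have ly: "2 \<le> length ys" using eq xs(2) path_edges_empty_iff[of xs] path_edges_empty_iff[of ys]
    by (metis not_le)
  have "x \<in> set ys" using Union_path_edges[OF ly] Union_path_edges[OF xs(2)] eq xs' by auto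
  moreover have "{e \<in> path_edges ys. x \<in> e} = {{x, y}}"
    unfolding eq[symmetric] xs' by (rule path_edges_at_start) (use xs(1) xs' in simp)
  ultimately have "x = hd ys \<or> x = last ys"
    using path_edges_at_interior[OF ys] by (metis (mono_tags, lifting) mem_Collect_eq singletonD)
  then show ?thesis
  proof
    assume "x = hd ys"
    then show ?thesis using path_edges_inj_start[OF xs(1) ys xs(2) eq] xs' by simp
  next
    assume "x = last ys"
    then have "hd (rev ys) = hd xs" using xs' ly by (simp add: hd_rev)
    then have "rev ys = xs"
      using path_edges_inj_start[OF xs(1) _ xs(2)] ys eq path_edges_rev by simp
    then show ?thesis by auto
  qed
qed

lemma hd_ne_last: "distinct xs \<Longrightarrow> 2 \<le> length xs \<Longrightarrow> hd xs \<noteq> last xs"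
  by (cases xs) (auto simp: last_in_set)

lemma LH_conv_sum: "degree p \<le> N \<Longrightarrow> LH t p = (\<Sum>i\<le>N. coeff p i * real (mu t i))"
  unfolding LH_def by (rule sum.mono_neutral_left) (auto simp: coeff_eq_0)

lemma LH_add: "LH t (p + q) = LH t p + LH t q"
proof -
  define N where "N = max (degree p) (degree q)"
  have "degree (p + q) \<le> N" "degree p \<le> N" "degree q \<le> N"
    unfolding N_def by (auto intro: degree_add_le)
  then show ?thesis by (simp add: LH_conv_sum sum.distrib algebra_simps)
qed

lemma LH_sum: "finite S \<Longrightarrow> LH t (\<Sum>x\<in>S. f x) = (\<Sum>x\<in>S. LH t (f x))"
  by (induction S rule: finite_induct) (simp add: LH_def, simp add: LH_add)

lemma LH_monom: "LH t (monom c k) = c * real (mu t k)"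
proof -
  have "LH t (monom c k) = (\<Sum>i\<le>k. coeff (monom c k) i * real (mu t i))"
    by (rule LH_conv_sum) (simp add: degree_monom_le)
  also have "\<dots> = (\<Sum>i\<le>k. if i = k then c * real (mu t k) else 0)"
    by (intro sum.cong refl) (auto simp: coeff_monom)
  also have "\<dots> = c * real (mu t k)" by (simp add: sum.delta)
  finally show ?thesis .
qed

lemma alternating_sum_Pow:
  assumes "finite S"
  shows "(\<Sum>F\<in>Pow S. (-1::real) ^ card F) = (if S = {} then 1 else 0)"
  using assms
proof (induction S rule: finite_induct)
  case (insert x S)
  have inj: "inj_on (insert x) (Pow S)" using insert
    by (simp add: inj_on_def) (metis Pow_iff insert_absorb insert_ident subsetD)
  have "(\<Sum>F\<in>Pow (insert x S). (-1::real) ^ card F)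
      = (\<Sum>F\<in>Pow S. (-1::real) ^ card F) + (\<Sum>F\<in>insert x ` Pow S. (-1::real) ^ card F)"
    unfolding Pow_insert using insert by (intro sum.union_disjoint) auto
  also have "(\<Sum>F\<in>insert x ` Pow S. (-1::real) ^ card F) = (\<Sum>F\<in>Pow S. (-1::real) ^ card (insert x F))"
    using inj by (simp add: sum.reindex)
  also have "\<dots> = (\<Sum>F\<in>Pow S. - ((-1::real) ^ card F))"
    using insert by (intro sum.cong refl) (auto simp: card_insert_if finite_subset)
  finally show ?case by (simp add: sum_negf)
qed simp

lemma bij_betw_Collect:
  assumes "bij_betw f A B" "\<And>x. x \<in> A \<Longrightarrow> Q (f x) \<longleftrightarrow> P x"
  shows "bij_betw f {x \<in> A. P x} {y \<in> B. Q y}"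
  using assms unfolding bij_betw_def by (auto intro: inj_on_subset)

text \<open>Half of the orderings of a set with at least two elements start with a smaller
  element than they end with (the other half being their reversals).\<close>
lemma card_oriented_permutations:
  fixes V :: "'a :: linorder set"
  assumes V: "finite V" "card V \<ge> 2"
  shows "2 * card {xs \<in> permutations_of_set V. hd xs < last xs} = fact (card V)"
proof -
  define L where "L = {xs \<in> permutations_of_set V. hd xs < last xs}"
  have rev_perm: "rev xs \<in> permutations_of_set V \<longleftrightarrow> xs \<in> permutations_of_set V" for xs
    by (auto simp: permutations_of_set_def)
  have ends: "hd (rev xs) = last xs" "last (rev xs) = hd xs" if "xs \<noteq> []" for xs :: "'a list"
    using that by (auto simp: hd_rev last_rev)
  have split: "permutations_of_set V = L \<union> rev ` L"
  proof (intro equalityI subsetI)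
    fix xs assume xs: "xs \<in> permutations_of_set V"
    then have "distinct xs" "length xs = card V"
      using distinct_card[of xs] by (auto simp: permutations_of_set_def)
    then have "hd xs \<noteq> last xs" "xs \<noteq> []" using V(2) hd_ne_last[of xs] by auto
    then have "xs \<in> L \<or> rev xs \<in> L"
      using xs ends[of xs] rev_perm[of xs] unfolding L_def by auto
    then show "xs \<in> L \<union> rev ` L" by (metis Un_iff image_eqI rev_rev_ident)
  qed (auto simp: L_def permutations_of_set_def)
  have "L \<inter> rev ` L = {}"
  proof (rule ccontr)
    assume "L \<inter> rev ` L \<noteq> {}"
    then obtain ys where ys: "ys \<in> L" "rev ys \<in> L" by auto
    then have "ys \<noteq> []" using V by (auto simp: L_def permutations_of_set_def)
    then show False using ys ends[of ys] unfolding L_def by auto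
  qed
  then have "card (permutations_of_set V) = card L + card (rev ` L)"
    unfolding split by (intro card_Un_disjoint) (auto simp: L_def)
  moreover have "card (rev ` L) = card L" by (rule card_image) (simp add: inj_on_def)
  ultimately show ?thesis using V(1) by (simp add: L_def)
qed

text \<open>The arithmetic of the recursion for transversal covers: with p = C(tk+t, t) (t+1)!/2
  choices of the first path, the count for k passes to the count for k+1.\<close>
lemma transversal_count_step:
  fixes t k p :: nat
  assumes p: "2 * p = ((t * k + t) choose t) * fact (Suc t)"
  shows "real p * (((real t + 1) / 2) ^ k * fact (t * k)) = ((real t + 1) / 2) ^ Suc k * fact (t * Suc k)"
proof -
  define C where "C = real ((t * k + t) choose t)"
  have "(fact t * fact (t * k) * ((t * k + t) choose t) :: nat) = fact (t * k + t)"
    using binomial_fact_lemma[of t "t * k + t"] by simp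
  then have bf: "fact t * fact (t * k) * C = fact (t * Suc k)"
    unfolding C_def by (metis (mono_tags, lifting) add.commute mult_Suc_right of_nat_fact of_nat_mult)
  have hp: "real p = C * ((real t + 1) * fact t) / 2"
    using arg_cong[OF p, of real] unfolding C_def by (simp add: field_simps fact_Suc)
  have "real p * fact (t * k) = (real t + 1) / 2 * (fact t * fact (t * k) * C)"
    unfolding hp by (simp add: field_simps)
  then have e: "real p * fact (t * k) = (real t + 1) / 2 * fact (t * Suc k)"
    by (simp only: bf)
  define c where "c = (real t + 1) / 2"
  have "real p * (c ^ k * fact (t * k)) = c ^ k * (real p * fact (t * k))" by (simp only: ac_simps)
  also have "\<dots> = c ^ Suc k * fact (t * Suc k)" unfolding e c_def[symmetric] by simp
  finally show ?thesis unfolding c_def .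
qed

section \<open>Families of disjoint t-paths on an arbitrary vertex set\<close>

definition paths :: "nat \<Rightarrow> nat set set set" where
  "paths t = {path_edges xs | xs. distinct xs \<and> length xs = Suc t}"

definition path_families :: "nat \<Rightarrow> nat set \<Rightarrow> nat set set set set" where
  "path_families t V = {F. F \<subseteq> paths t \<and> (\<forall>P\<in>F. pverts P \<subseteq> V) \<and> disjoint_family_on pverts F}"

definition covered :: "nat set set set \<Rightarrow> nat set" where
  "covered F = (\<Union>P\<in>F. pverts P)"

definition path_covers :: "nat \<Rightarrow> nat set \<Rightarrow> nat set set set set" where
  "path_covers t V = {F \<in> path_families t V. covered F = V}"

lemma finite_path_families: "finite V \<Longrightarrow> finite (path_families t V)"
proof -
  assume "finite V"
  moreover have "path_families t V \<subseteq> Pow (Pow (Pow V))"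
    unfolding path_families_def pverts_def by auto
  ultimately show ?thesis by (meson finite_Pow_iff finite_subset)
qed

lemma finite_path_covers: "finite V \<Longrightarrow> finite (path_covers t V)"
  unfolding path_covers_def using finite_path_families by simp

lemma finite_path_family: "F \<in> path_families t V \<Longrightarrow> finite V \<Longrightarrow> finite F"
proof -
  assume "F \<in> path_families t V" "finite V"
  moreover have "F \<subseteq> Pow (Pow V)"
    using \<open>F \<in> path_families t V\<close> unfolding path_families_def pverts_def by auto
  ultimately show ?thesis by (meson finite_Pow_iff finite_subset)
qed

definition relabel_path :: "(nat \<Rightarrow> nat) \<Rightarrow> nat set set \<Rightarrow> nat set set" where
  "relabel_path h P = (\<lambda>e. h ` e) ` P"

definition relabel :: "(nat \<Rightarrow> nat) \<Rightarrow> nat set set set \<Rightarrow> nat set set set" where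
  "relabel h F = relabel_path h ` F"

lemma pverts_relabel_path: "pverts (relabel_path h P) = h ` pverts P"
  by (auto simp: pverts_def relabel_path_def)

lemma covered_relabel: "covered (relabel h F) = h ` covered F"
  by (auto simp: covered_def relabel_def pverts_relabel_path)

lemma relabel_path_cancel:
  assumes "\<forall>x\<in>pverts P. k (j x) = x"
  shows "relabel_path k (relabel_path j P) = P"
proof -
  have "k ` j ` e = e" if "e \<in> P" for e
    using assms that unfolding pverts_def image_image by (simp add: UnionI)
  then show ?thesis unfolding relabel_path_def image_image by simp
qed

lemma relabel_cancel:
  assumes "\<forall>P\<in>F. \<forall>x\<in>pverts P. k (j x) = x"
  shows "relabel k (relabel j F) = F"
  using assms unfolding relabel_def image_image by (simp add: relabel_path_cancel)

lemma path_families_subset: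
  "F \<in> path_families t V \<Longrightarrow> F' \<subseteq> F \<Longrightarrow> (\<forall>P\<in>F'. pverts P \<subseteq> W) \<Longrightarrow> F' \<in> path_families t W"
  unfolding path_families_def using disjoint_family_on_mono[of F' F pverts] by auto

lemma covered_Un: "covered (F \<union> G) = covered F \<union> covered G"
  by (auto simp: covered_def)

lemma covered_insert: "covered (insert P K) = pverts P \<union> covered K"
  by (simp add: covered_def)

lemma covered_Diff:
  assumes disj: "disjoint_family_on pverts K" and F: "F \<subseteq> K"
  shows "covered (K - F) = covered K - covered F"
proof
  show "covered (K - F) \<subseteq> covered K - covered F"
  proof
    fix x assume "x \<in> covered (K - F)"
    then obtain P where P: "P \<in> K" "P \<notin> F" "x \<in> pverts P" by (auto simp: covered_def)
    have "x \<notin> pverts Q" if "Q \<in> F" for Q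
      using disjoint_family_onD[OF disj P(1), of Q] that P F by auto
    then show "x \<in> covered K - covered F" using P by (auto simp: covered_def)
  qed
qed (auto simp: covered_def)

lemma disjoint_family_on_Un:
  assumes "disjoint_family_on pverts F" "disjoint_family_on pverts G" "covered F \<inter> covered G = {}"
  shows "disjoint_family_on pverts (F \<union> G)"
  unfolding disjoint_family_on_def
proof (intro ballI impI)
  fix P Q assume P: "P \<in> F \<union> G" and Q: "Q \<in> F \<union> G" and PQ: "P \<noteq> Q"
  consider "P \<in> F" "Q \<in> F" | "P \<in> G" "Q \<in> G" | "P \<in> F" "Q \<in> G" | "P \<in> G" "Q \<in> F"
    using P Q by blast
  then show "pverts P \<inter> pverts Q = {}"
  proof cases
    case 1
    then show ?thesis using disjoint_family_onD[OF assms(1)] PQ by blast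
  next
    case 2
    then show ?thesis using disjoint_family_onD[OF assms(2)] PQ by blast
  qed (use assms(3) in \<open>auto simp: covered_def\<close>)
qed

definition crossing_covers :: "nat \<Rightarrow> nat set \<Rightarrow> nat set \<Rightarrow> nat set set set set" where
  "crossing_covers t A B = {K \<in> path_covers t (A \<union> B). \<forall>P\<in>K. \<not> pverts P \<subseteq> A \<and> \<not> pverts P \<subseteq> B}"

definition transversal_covers :: "nat \<Rightarrow> nat set \<Rightarrow> nat set \<Rightarrow> nat set set set set" where
  "transversal_covers t A B = {K \<in> path_covers t (A \<union> B). \<forall>P\<in>K. card (pverts P \<inter> B) = 1}"

context
  fixes t :: nat
  assumes t: "t \<ge> 1"
begin

text \<open>Since a t-path has at least one edge, its vertices are those of its vertex list.\<close>
lemma paths_pverts: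
  "P \<in> paths t \<Longrightarrow> \<exists>xs. P = path_edges xs \<and> distinct xs \<and> length xs = Suc t \<and> pverts P = set xs"
  using t unfolding paths_def pverts_def by (auto simp: Union_path_edges)

lemma card_pverts: "P \<in> paths t \<Longrightarrow> finite (pverts P) \<and> card (pverts P) = Suc t"
  using paths_pverts by (metis distinct_card finite_set)

lemma pverts_nonempty: "P \<in> paths t \<Longrightarrow> pverts P \<noteq> {}"
  using card_pverts by fastforce

lemma tpaths_eq: "tpaths t n = {P \<in> paths t. pverts P \<subseteq> {0..<n}}"
  using t Union_path_edges_subset unfolding tpaths_conv paths_def pverts_def
  by (fastforce simp: Union_path_edges)

lemma disj_families_eq: "disj_families t n = path_families t {0..<n}"
  unfolding disj_families_def path_families_def tpaths_eq disjoint_family_on_def by auto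

lemma mu_eq: "mu t n = card (path_covers t {0..<n})"
  unfolding mu_def path_covers_def covered_def disj_families_eq ..

lemma card_covered:
  assumes "F \<in> path_families t V" "finite V"
  shows "card (covered F) = Suc t * card F"
proof -
  have "card (covered F) = (\<Sum>P\<in>F. card (pverts P))"
    unfolding covered_def using assms finite_path_family[OF assms] card_pverts
    by (intro card_UN_disjoint) (auto simp: path_families_def disjoint_family_on_def)
  also have "\<dots> = (\<Sum>P\<in>F. Suc t)"
    using assms card_pverts by (intro sum.cong) (auto simp: path_families_def)
  finally show ?thesis by simp
qed

subsection \<open>Invariance under relabelling of the vertices\<close>

lemma relabel_path_paths: "P \<in> paths t \<Longrightarrow> inj_on h (pverts P) \<Longrightarrow> relabel_path h P \<in> paths t"
proof -
  assume P: "P \<in> paths t" and h: "inj_on h (pverts P)"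
  obtain xs where xs: "P = path_edges xs" "distinct xs" "length xs = Suc t" "pverts P = set xs"
    using paths_pverts[OF P] by blast
  have "relabel_path h P = path_edges (map h xs)" by (simp add: relabel_path_def path_edges_map xs)
  then show ?thesis unfolding paths_def using xs h by (auto simp: distinct_map)
qed

lemma relabel_path_families:
  assumes h: "inj_on h V" and F: "F \<in> path_families t V"
  shows "relabel h F \<in> path_families t (h ` V)"
proof -
  have sub: "pverts P \<subseteq> V" if "P \<in> F" for P using F that by (auto simp: path_families_def)
  have "relabel_path h P \<in> paths t" if "P \<in> F" for P
    using F that sub by (intro relabel_path_paths) (auto simp: path_families_def intro: inj_on_subset[OF h])
  moreover have "pverts (relabel_path h P) \<subseteq> h ` V" if "P \<in> F" for P
    using sub[OF that] by (auto simp: pverts_relabel_path)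
  moreover have "pverts (relabel_path h P) \<inter> pverts (relabel_path h Q) = {}"
    if "P \<in> F" "Q \<in> F" "relabel_path h P \<noteq> relabel_path h Q" for P Q
  proof -
    have "P \<noteq> Q" using that by auto
    then have "pverts P \<inter> pverts Q = {}"
      using F that by (auto simp: path_families_def disjoint_family_on_def)
    then have "h ` pverts P \<inter> h ` pverts Q = {}"
      using sub[OF that(1)] sub[OF that(2)] h unfolding inj_on_def by blast
    then show ?thesis by (simp add: pverts_relabel_path)
  qed
  ultimately show ?thesis
    unfolding path_families_def disjoint_family_on_def relabel_def by blast
qed

lemma bij_betw_relabel:
  assumes h: "inj_on h V"
  shows "bij_betw (relabel h) (path_families t V) (path_families t (h ` V))"
proof (rule bij_betw_byWitness[where f' = "relabel (inv_into V h)"])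
  have g: "inj_on (inv_into V h) (h ` V)" "inv_into V h ` h ` V = V"
    using h by (auto simp: inj_on_inv_into)
  show "\<forall>F\<in>path_families t V. relabel (inv_into V h) (relabel h F) = F"
  proof (intro ballI relabel_cancel)
    fix F P x assume "F \<in> path_families t V" "P \<in> F" "x \<in> pverts P"
    then have "x \<in> V" by (auto simp: path_families_def)
    then show "inv_into V h (h x) = x" using h by (rule inv_into_f_f[rotated])
  qed
  show "\<forall>F\<in>path_families t (h ` V). relabel h (relabel (inv_into V h) F) = F"
  proof (intro ballI relabel_cancel)
    fix F P x assume "F \<in> path_families t (h ` V)" "P \<in> F" "x \<in> pverts P"
    then have "x \<in> h ` V" by (auto simp: path_families_def)
    then show "h (inv_into V h x) = x" by (rule f_inv_into_f)
  qed
  show "relabel h ` path_families t V \<subseteq> path_families t (h ` V)"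
    using relabel_path_families[OF h] by auto
  show "relabel (inv_into V h) ` path_families t (h ` V) \<subseteq> path_families t V"
    using relabel_path_families[OF g(1)] g(2) by auto
qed

lemma card_relabel:
  assumes h: "inj_on h V" and F: "F \<in> path_families t V"
  shows "card (relabel h F) = card F"
proof -
  have "inj_on (relabel_path h) F"
  proof (rule inj_on_inverseI)
    fix P assume "P \<in> F"
    then show "relabel_path (inv_into V h) (relabel_path h P) = P"
      using h F by (intro relabel_path_cancel) (auto simp: path_families_def subsetD)
  qed
  then show ?thesis unfolding relabel_def by (rule card_image)
qed

lemma bij_betw_relabel_covers:
  assumes h: "inj_on h V"
  shows "bij_betw (relabel h) (path_covers t V) (path_covers t (h ` V))"
  unfolding path_covers_def
proof (rule bij_betw_Collect[OF bij_betw_relabel[OF h]])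
  fix F assume "F \<in> path_families t V"
  then have "covered F \<subseteq> V" by (auto simp: covered_def path_families_def)
  then show "covered (relabel h F) = h ` V \<longleftrightarrow> covered F = V"
    unfolding covered_relabel using h by (simp add: inj_on_image_eq_iff)
qed

lemma mu_card: "finite W \<Longrightarrow> mu t (card W) = card (path_covers t W)"
proof -
  assume "finite W"
  then obtain h where h: "bij_betw h {0..<card W} W" using ex_bij_betw_nat_finite by blast
  then show ?thesis
    using bij_betw_relabel_covers[OF bij_betw_imp_inj_on[OF h]]
    by (simp add: mu_eq bij_betw_same_card bij_betw_imp_surj_on)
qed

lemma Hpoly_card:
  assumes "finite V"
  shows "Hpoly t (card V) = (\<Sum>F\<in>path_families t V. monom ((-1) ^ card F) (card V - (t + 1) * card F))"
    (is "_ = (\<Sum>F\<in>_. ?g F)")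
proof -
  obtain h where h: "bij_betw h {0..<card V} V" using assms ex_bij_betw_nat_finite by blast
  have hV: "h ` {0..<card V} = V" and inj: "inj_on h {0..<card V}" using h by (auto simp: bij_betw_def)
  have "(\<Sum>F\<in>path_families t V. ?g F) = (\<Sum>F\<in>path_families t {0..<card V}. ?g (relabel h F))"
    using sum.reindex_bij_betw[OF bij_betw_relabel[OF inj], of ?g] hV by simp
  also have "\<dots> = (\<Sum>F\<in>path_families t {0..<card V}. ?g F)"
    by (intro sum.cong refl) (simp add: card_relabel[OF inj])
  finally show ?thesis unfolding Hpoly_def disj_families_eq by simp
qed

subsection \<open>Inclusion-exclusion: L (H_|A| * H_|B|) counts crossing covers\<close>

lemma join_cover:
  assumes AB: "A \<inter> B = {}" and F: "F \<in> path_families t A" and G: "G \<in> path_families t B"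
    and C: "C \<in> path_covers t (A \<union> B - covered F - covered G)"
  shows "F \<union> G \<union> C \<in> path_covers t (A \<union> B)" "F \<union> G \<union> C - F - G = C"
proof -
  have F': "F \<subseteq> paths t" "disjoint_family_on pverts F" "covered F \<subseteq> A"
    using F by (auto simp: covered_def path_families_def)
  have G': "G \<subseteq> paths t" "disjoint_family_on pverts G" "covered G \<subseteq> B"
    using G by (auto simp: covered_def path_families_def)
  have C': "C \<subseteq> paths t" "disjoint_family_on pverts C" "covered C = A \<union> B - covered F - covered G"
    using C by (auto simp: path_covers_def path_families_def)
  have "disjoint_family_on pverts (F \<union> G)"
    using F'(2,3) G'(2,3) AB by (intro disjoint_family_on_Un) auto
  moreover have disj: "covered (F \<union> G) \<inter> covered C = {}" using C'(3) by (auto simp: covered_Un)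
  ultimately have "disjoint_family_on pverts (F \<union> G \<union> C)"
    using disjoint_family_on_Un[of "F \<union> G" C] C'(2) by blast
  moreover have cov: "covered (F \<union> G \<union> C) = A \<union> B"
    using F'(3) G'(3) C'(3) by (auto simp: covered_Un)
  moreover have "\<forall>P\<in>F \<union> G \<union> C. pverts P \<subseteq> A \<union> B"
    unfolding cov[symmetric] covered_def by blast
  ultimately show "F \<union> G \<union> C \<in> path_covers t (A \<union> B)"
    using F'(1) G'(1) C'(1) by (simp add: path_covers_def path_families_def)
  have "P \<notin> F \<union> G" if P: "P \<in> C" for P
  proof
    assume "P \<in> F \<union> G"
    then have "pverts P = {}" using P disj unfolding covered_def by blast
    then show False using pverts_nonempty C'(1) P by blast
  qed
  then show "F \<union> G \<union> C - F - G = C" by blast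
qed

lemma split_cover:
  assumes K: "K \<in> path_covers t (A \<union> B)"
    and F: "F \<subseteq> {P \<in> K. pverts P \<subseteq> A}" and G: "G \<subseteq> {P \<in> K. pverts P \<subseteq> B}"
  shows "F \<in> path_families t A" "G \<in> path_families t B"
    "K - F - G \<in> path_covers t (A \<union> B - covered F - covered G)"
proof -
  have fam: "K \<in> path_families t (A \<union> B)" and covK: "covered K = A \<union> B"
    using K by (auto simp: path_covers_def)
  show "F \<in> path_families t A" using path_families_subset[OF fam, of F A] F by blast
  show "G \<in> path_families t B" using path_families_subset[OF fam, of G B] G by blast
  have disj: "disjoint_family_on pverts K" using fam by (simp add: path_families_def)
  have "K - F - G = K - (F \<union> G)" by blast
  moreover have "covered (K - (F \<union> G)) = covered K - covered (F \<union> G)"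
    by (rule covered_Diff[OF disj]) (use F G in blast)
  ultimately have cov: "covered (K - F - G) = A \<union> B - covered F - covered G"
    using covK by (simp add: covered_Un Diff_eq Int_assoc)
  moreover have "K - F - G \<in> path_families t (A \<union> B - covered F - covered G)"
    using path_families_subset[OF fam, of "K - F - G"] cov by (auto simp: covered_def)
  ultimately show "K - F - G \<in> path_covers t (A \<union> B - covered F - covered G)"
    by (simp add: path_covers_def)
qed

lemma bij_betw_join_cover:
  assumes AB: "A \<inter> B = {}"
  shows "bij_betw (\<lambda>(F, G, C). (F \<union> G \<union> C, F, G))
    (SIGMA F:path_families t A. SIGMA G:path_families t B. path_covers t (A \<union> B - covered F - covered G))
    (SIGMA K:path_covers t (A \<union> B). SIGMA F:Pow {P \<in> K. pverts P \<subseteq> A}. Pow {P \<in> K. pverts P \<subseteq> B})"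
    (is "bij_betw ?f ?D1 ?D2")
proof -
  let ?g = "\<lambda>(K, F, G). (F, G, K - F - G)"
  have join: "?f x \<in> ?D2 \<and> ?g (?f x) = x" if x_mem: "x \<in> ?D1" for x
  proof -
    obtain F G C where x: "x = (F, G, C)" and mem: "F \<in> path_families t A" "G \<in> path_families t B"
      "C \<in> path_covers t (A \<union> B - covered F - covered G)" using x_mem by (cases x) auto
    have "\<forall>P\<in>F. pverts P \<subseteq> A" "\<forall>P\<in>G. pverts P \<subseteq> B"
      using mem(1,2) by (simp_all add: path_families_def)
    then show ?thesis using join_cover[OF AB mem] by (auto simp: x)
  qed
  have split: "?g y \<in> ?D1 \<and> ?f (?g y) = y" if y_mem: "y \<in> ?D2" for y
  proof -
    obtain K F G where y: "y = (K, F, G)" and mem: "K \<in> path_covers t (A \<union> B)"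
      "F \<subseteq> {P \<in> K. pverts P \<subseteq> A}" "G \<subseteq> {P \<in> K. pverts P \<subseteq> B}" using y_mem by (cases y) auto
    show ?thesis using split_cover[OF mem] mem(2,3) by (auto simp: y)
  qed
  show ?thesis
  proof (rule bij_betw_byWitness[where f' = ?g])
    show "\<forall>x\<in>?D1. ?g (?f x) = x" using join by simp
    show "\<forall>y\<in>?D2. ?f (?g y) = y" using split by simp
    show "?f ` ?D1 \<subseteq> ?D2" using join by (simp add: image_subset_iff)
    show "?g ` ?D2 \<subseteq> ?D1" using split by (simp add: image_subset_iff)
  qed
qed

text \<open>Summing over the subsets F and G with alternating signs, a cover K survives only if
  it has no path inside A and none inside B.\<close>
lemma inclusion_exclusion_covers:
  assumes AB: "A \<inter> B = {}" "finite A" "finite B"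
  shows "(\<Sum>F\<in>path_families t A. \<Sum>G\<in>path_families t B.
            (-1::real) ^ (card F + card G) * real (card (path_covers t (A \<union> B - covered F - covered G))))
       = real (card (crossing_covers t A B))"
proof -
  define w :: "nat set set set \<Rightarrow> nat set set set \<Rightarrow> real"
    where "w F G = (-1) ^ card F * (-1) ^ card G" for F G
  define KA where "KA K = {P \<in> K. pverts P \<subseteq> A}" for K :: "nat set set set"
  define KB where "KB K = {P \<in> K. pverts P \<subseteq> B}" for K :: "nat set set set"
  have fin: "finite (A \<union> B)" using AB by simp
  have finK: "finite (KA K)" "finite (KB K)" if "K \<in> path_covers t (A \<union> B)" for K
    using that finite_path_family[OF _ fin] by (auto simp: KA_def KB_def path_covers_def)
  have "(\<Sum>F\<in>path_families t A. \<Sum>G\<in>path_families t B.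
            (-1::real) ^ (card F + card G) * real (card (path_covers t (A \<union> B - covered F - covered G))))
      = (\<Sum>F\<in>path_families t A. \<Sum>G\<in>path_families t B. \<Sum>C\<in>path_covers t (A \<union> B - covered F - covered G). w F G)"
    by (simp add: w_def power_add mult.commute)
  also have "\<dots> = (\<Sum>F\<in>path_families t A. \<Sum>(G, C)\<in>(SIGMA G:path_families t B. path_covers t (A \<union> B - covered F - covered G)). w F G)"
    using finite_path_families finite_path_covers AB by (intro sum.cong refl sum.Sigma) auto
  also have "\<dots> = (\<Sum>(F, G, C)\<in>(SIGMA F:path_families t A. SIGMA G:path_families t B.
                        path_covers t (A \<union> B - covered F - covered G)). w F G)"
    using finite_path_families finite_path_covers AB
    by (subst sum.Sigma) (auto intro!: finite_SigmaI)
  also have "\<dots> = (\<Sum>(K, F, G)\<in>(SIGMA K:path_covers t (A \<union> B). SIGMA F:Pow (KA K). Pow (KB K)). w F G)"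
    using sum.reindex_bij_betw[OF bij_betw_join_cover[OF AB(1)], of "\<lambda>(K, F, G). w F G"]
    unfolding KA_def KB_def by (simp add: case_prod_unfold)
  also have "\<dots> = (\<Sum>K\<in>path_covers t (A \<union> B). \<Sum>(F, G)\<in>Pow (KA K) \<times> Pow (KB K). w F G)"
    using finite_path_covers[OF fin] finK by (subst sum.Sigma) auto
  also have "\<dots> = (\<Sum>K\<in>path_covers t (A \<union> B).
      (\<Sum>F\<in>Pow (KA K). (-1::real) ^ card F) * (\<Sum>G\<in>Pow (KB K). (-1::real) ^ card G))"
    by (simp add: w_def sum_product sum.cartesian_product)
  also have "\<dots> = (\<Sum>K\<in>path_covers t (A \<union> B). if KA K = {} \<and> KB K = {} then 1 else 0)"
    using finK by (intro sum.cong refl) (simp add: alternating_sum_Pow)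
  also have "\<dots> = real (card (crossing_covers t A B))"
  proof -
    have "(KA K = {} \<and> KB K = {}) = (\<forall>P\<in>K. \<not> pverts P \<subseteq> A \<and> \<not> pverts P \<subseteq> B)" for K
      by (auto simp: KA_def KB_def)
    then show ?thesis using finite_path_covers[OF fin]
      by (simp add: crossing_covers_def sum.inter_filter[symmetric])
  qed
  finally show ?thesis .
qed

lemma LH_Hpoly_product:
  assumes AB: "A \<inter> B = {}" "finite A" "finite B"
  shows "LH t (Hpoly t (card A) * Hpoly t (card B))
       = (\<Sum>F\<in>path_families t A. \<Sum>G\<in>path_families t B.
            (-1::real) ^ (card F + card G) * real (card (path_covers t (A \<union> B - covered F - covered G))))"
proof -
  have free: "mu t (card A - (t + 1) * card F + (card B - (t + 1) * card G))
      = card (path_covers t (A \<union> B - covered F - covered G))"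
    if F: "F \<in> path_families t A" and G: "G \<in> path_families t B" for F G
  proof -
    have sub: "covered F \<subseteq> A" "covered G \<subseteq> B"
      using F G by (auto simp: covered_def path_families_def)
    then have "A \<union> B - covered F - covered G = (A - covered F) \<union> (B - covered G)" using AB by blast
    moreover have "card ((A - covered F) \<union> (B - covered G)) = card (A - covered F) + card (B - covered G)"
      using AB by (intro card_Un_disjoint) auto
    moreover have "card (A - covered F) = card A - (t + 1) * card F"
      using sub AB card_covered[OF F] by (simp add: card_Diff_subset finite_subset)
    moreover have "card (B - covered G) = card B - (t + 1) * card G"
      using sub AB card_covered[OF G] by (simp add: card_Diff_subset finite_subset)
    ultimately show ?thesis using mu_card[of "A \<union> B - covered F - covered G"] AB by simp
  qed
  have "Hpoly t (card A) * Hpoly t (card B) = (\<Sum>F\<in>path_families t A. \<Sum>G\<in>path_families t B.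
      monom ((-1) ^ card F * (-1) ^ card G) (card A - (t + 1) * card F + (card B - (t + 1) * card G)))"
    using AB by (simp add: Hpoly_card sum_product mult_monom)
  then have "LH t (Hpoly t (card A) * Hpoly t (card B)) = (\<Sum>F\<in>path_families t A. \<Sum>G\<in>path_families t B.
      (-1) ^ (card F + card G) * real (mu t (card A - (t + 1) * card F + (card B - (t + 1) * card G))))"
    using AB finite_path_families by (simp add: LH_sum LH_monom power_add)
  also have "\<dots> = (\<Sum>F\<in>path_families t A. \<Sum>G\<in>path_families t B.
      (-1) ^ (card F + card G) * real (card (path_covers t (A \<union> B - covered F - covered G))))"
    by (intro sum.cong refl) (simp add: free[simplified])
  finally show ?thesis .
qed

lemma LH_Hpoly_product_crossing:
  assumes "A \<inter> B = {}" "finite A" "finite B"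
  shows "LH t (Hpoly t (card A) * Hpoly t (card B)) = real (card (crossing_covers t A B))"
  using assms by (simp add: LH_Hpoly_product inclusion_exclusion_covers)

subsection \<open>Counting crossing covers\<close>

text \<open>Each path of a crossing cover contains a vertex of B, so a crossing cover has at most
  |B| paths, while it has exactly (|A| + |B|)/(t+1) of them.\<close>
lemma crossing_covers_card:
  assumes AB: "A \<inter> B = {}" "finite A" "finite B" and K: "K \<in> crossing_covers t A B"
  shows "Suc t * card K = card A + card B" "card K \<le> card B"
proof -
  have fam: "K \<in> path_families t (A \<union> B)" and cov: "covered K = A \<union> B"
    using K by (auto simp: crossing_covers_def path_covers_def)
  show "Suc t * card K = card A + card B"
    using card_covered[OF fam] cov AB by (simp add: card_Un_disjoint)
  have meets_B: "pverts P \<inter> B \<noteq> {}" if P: "P \<in> K" for P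
  proof -
    have "pverts P \<subseteq> A \<union> B" "\<not> pverts P \<subseteq> A"
      using K P by (auto simp: crossing_covers_def path_covers_def path_families_def)
    then show ?thesis by blast
  qed
  define c where "c P = (SOME x. x \<in> pverts P \<inter> B)" for P
  have c: "c P \<in> pverts P \<inter> B" if "P \<in> K" for P
    unfolding c_def using meets_B[OF that] by (metis ex_in_conv someI_ex)
  have "inj_on c K"
  proof (rule inj_onI)
    fix P Q assume P: "P \<in> K" and Q: "Q \<in> K" and "c P = c Q"
    then have "pverts P \<inter> pverts Q \<noteq> {}" using c[OF P] c[OF Q] by auto
    then show "P = Q"
      using fam P Q disjoint_family_onD[of pverts K P Q] by (auto simp: path_families_def)
  qed
  moreover have "c ` K \<subseteq> B" using c by auto
  ultimately show "card K \<le> card B" using AB(3) by (rule card_inj_on_le)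
qed

text \<open>If |A| = t|B|, a crossing cover has exactly |B| paths, each meeting B, so each path
  meets B in exactly one vertex; and conversely such paths cross.\<close>
lemma crossing_eq_transversal:
  assumes AB: "A \<inter> B = {}" "finite A" "finite B" and c: "card A = t * card B"
  shows "crossing_covers t A B = transversal_covers t A B"
proof
  show "crossing_covers t A B \<subseteq> transversal_covers t A B"
  proof
    fix K assume K: "K \<in> crossing_covers t A B"
    have "Suc t * card K = Suc t * card B" using crossing_covers_card(1)[OF AB K] c by simp
    then have cK: "card K = card B" by (simp only: mult_cancel1) simp
    have KC: "K \<in> path_covers t (A \<union> B)" using K by (simp add: crossing_covers_def)
    have finK: "finite K" using KC AB finite_path_family by (auto simp: path_covers_def)
    have disj: "disjoint_family_on pverts K" and cov: "covered K = A \<union> B"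
      using KC by (auto simp: path_covers_def path_families_def)
    have ge: "1 \<le> card (pverts P \<inter> B)" if P: "P \<in> K" for P
    proof -
      have "pverts P \<subseteq> A \<union> B" "\<not> pverts P \<subseteq> A"
        using K P by (auto simp: crossing_covers_def path_covers_def path_families_def)
      then have "pverts P \<inter> B \<noteq> {}" by blast
      then show ?thesis using AB(3) by (simp add: Suc_le_eq card_gt_0_iff)
    qed
    have "(\<Union>P\<in>K. pverts P \<inter> B) = B" using cov unfolding covered_def by blast
    moreover have "card (\<Union>P\<in>K. pverts P \<inter> B) = (\<Sum>P\<in>K. card (pverts P \<inter> B))"
      using finK AB(3) disjoint_family_onD[OF disj] by (intro card_UN_disjoint) auto
    ultimately have "(\<Sum>P\<in>K. card (pverts P \<inter> B) - 1) = 0"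
      using cK ge by (simp add: sum_subtractf_nat)
    then have "\<forall>P\<in>K. card (pverts P \<inter> B) \<le> 1" using finK by simp
    then show "K \<in> transversal_covers t A B"
      using KC ge unfolding transversal_covers_def by (simp add: le_antisym)
  qed
  show "transversal_covers t A B \<subseteq> crossing_covers t A B"
  proof
    fix K assume K: "K \<in> transversal_covers t A B"
    have "\<not> pverts P \<subseteq> A \<and> \<not> pverts P \<subseteq> B" if P: "P \<in> K" for P
    proof
      have one: "card (pverts P \<inter> B) = 1" using K P by (auto simp: transversal_covers_def)
      then have "pverts P \<inter> B \<noteq> {}" by (metis card.empty zero_neq_one)
      then show "\<not> pverts P \<subseteq> A" using AB(1) by blast
      have "P \<in> paths t" using K P by (auto simp: transversal_covers_def path_covers_def path_families_def)
      then show "\<not> pverts P \<subseteq> B" using one card_pverts t by (auto simp: Int_absorb2)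
    qed
    then show "K \<in> crossing_covers t A B" using K by (auto simp: transversal_covers_def crossing_covers_def)
  qed
qed

text \<open>There are (t+1)!/2 t-paths with a given set of t+1 vertices: the orderings of the set
  modulo reversal.\<close>
lemma card_paths_on:
  assumes V: "card V = Suc t"
  shows "2 * card {P \<in> paths t. pverts P = V} = fact (Suc t)"
proof -
  have fin: "finite V" using V card.infinite by force
  define L where "L = {xs \<in> permutations_of_set V. hd xs < last xs}"
  have l2: "2 \<le> Suc t" using t by simp
  have perm: "xs \<in> permutations_of_set V \<longleftrightarrow> distinct xs \<and> length xs = Suc t \<and> set xs = V" for xs
    using V distinct_card[of xs] by (auto simp: permutations_of_set_def)
  have "bij_betw path_edges L {P \<in> paths t. pverts P = V}"
    unfolding bij_betw_def
  proof
    show "inj_on path_edges L"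
    proof (rule inj_onI)
      fix xs ys assume xs: "xs \<in> L" and ys: "ys \<in> L" and eq: "path_edges xs = path_edges ys"
      have "ys = xs \<or> ys = rev xs" using xs ys l2 perm by (intro path_edges_inj[OF _ _ _ eq]) (auto simp: L_def)
      moreover have "ys \<noteq> rev xs" using xs ys l2 perm by (auto simp: L_def hd_rev last_rev)
      ultimately show "xs = ys" by simp
    qed
    show "path_edges ` L = {P \<in> paths t. pverts P = V}"
    proof (intro equalityI subsetI)
      fix P assume "P \<in> path_edges ` L"
      then obtain xs where xs: "xs \<in> L" "P = path_edges xs" by auto
      then show "P \<in> {P \<in> paths t. pverts P = V}"
        using perm[of xs] l2 Union_path_edges[of xs] by (auto simp: L_def paths_def pverts_def)
    next
      fix P assume P: "P \<in> {P \<in> paths t. pverts P = V}"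
      then obtain xs where xs: "P = path_edges xs" "distinct xs" "length xs = Suc t" "pverts P = set xs"
        using paths_pverts by blast
      then have "xs \<noteq> []" "hd xs \<noteq> last xs" using l2 hd_ne_last[of xs] by auto
      then have "xs \<in> L \<or> rev xs \<in> L" using xs P perm[of xs] perm[of "rev xs"]
        by (auto simp: L_def hd_rev last_rev)
      then show "P \<in> path_edges ` L" using xs(1) path_edges_rev by (metis image_eqI)
    qed
  qed
  then have "card L = card {P \<in> paths t. pverts P = V}" by (rule bij_betw_same_card)
  then show ?thesis using card_oriented_permutations[OF fin] V l2 by (simp add: L_def)
qed

lemma card_paths_through:
  assumes A: "finite A" and b: "b \<notin> A"
  shows "2 * card {P \<in> paths t. pverts P \<subseteq> insert b A \<and> b \<in> pverts P} = (card A choose t) * fact (Suc t)"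
proof -
  define SS where "SS = {S. S \<subseteq> A \<and> card S = t}"
  define T where "T S = {P \<in> paths t. pverts P = insert b S}" for S
  have eq: "{P \<in> paths t. pverts P \<subseteq> insert b A \<and> b \<in> pverts P} = (\<Union>S\<in>SS. T S)"
  proof (intro equalityI subsetI)
    fix P assume P: "P \<in> {P \<in> paths t. pverts P \<subseteq> insert b A \<and> b \<in> pverts P}"
    then have "pverts P - {b} \<in> SS" "P \<in> T (pverts P - {b})"
      using card_pverts[of P] unfolding SS_def T_def by auto
    then show "P \<in> (\<Union>S\<in>SS. T S)" by blast
  qed (auto simp: SS_def T_def)
  have finSS: "finite SS" unfolding SS_def using A by simp
  have S: "finite S" "b \<notin> S" "card S = t" if "S \<in> SS" for S
    using that b A unfolding SS_def by (auto simp: finite_subset)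
  have card_T: "2 * card (T S) = fact (Suc t)" if "S \<in> SS" for S
    unfolding T_def using S[OF that] by (intro card_paths_on) simp
  have "finite (T S)" if "S \<in> SS" for S
  proof -
    have "T S \<subseteq> Pow (Pow (insert b S))" unfolding T_def pverts_def by auto
    then show ?thesis using S[OF that] by (meson finite_Pow_iff finite_insert finite_subset)
  qed
  moreover have "T S \<inter> T S' = {}" if "S \<in> SS" "S' \<in> SS" "S \<noteq> S'" for S S'
  proof -
    have "insert b S \<noteq> insert b S'" using that S[OF that(1)] S[OF that(2)] by (metis Diff_insert_absorb)
    then show ?thesis unfolding T_def by auto
  qed
  ultimately have "2 * card (\<Union>S\<in>SS. T S) = (\<Sum>S\<in>SS. 2 * card (T S))"
    using finSS by (simp add: card_UN_disjoint sum_distrib_left)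
  also have "\<dots> = (card A choose t) * fact (Suc t)"
    using card_T n_subsets[OF A] by (simp add: SS_def)
  finally show ?thesis by (simp add: eq)
qed

lemma path_covers_empty: "path_covers t {} = {{}}"
proof -
  have "K = {}" if "K \<in> path_covers t {}" for K
    using that pverts_nonempty by (fastforce simp: path_covers_def path_families_def)
  then show ?thesis by (auto simp: path_covers_def path_families_def covered_def disjoint_family_on_def)
qed

lemma transversal_cover_remove_path:
  assumes AB: "A \<inter> B = {}" and b: "b \<in> B" and P: "pverts P \<subseteq> insert b A" "b \<in> pverts P"
    and K: "K \<in> transversal_covers t A B" "P \<in> K"
  shows "K - {P} \<in> transversal_covers t (A - pverts P) (B - {b})"
proof -
  have fam: "K \<in> path_families t (A \<union> B)" and cov: "covered K = A \<union> B"
    and one: "\<And>Q. Q \<in> K \<Longrightarrow> card (pverts Q \<inter> B) = 1"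
    using K by (auto simp: transversal_covers_def path_covers_def)
  have disj: "pverts Q \<inter> pverts P = {}" if "Q \<in> K - {P}" for Q
    using fam K(2) that disjoint_family_onD[of pverts K Q P] by (auto simp: path_families_def)
  have rest: "A - pverts P \<union> (B - {b}) = A \<union> B - pverts P" using AB P b by blast
  have "covered (K - {P}) = A \<union> B - pverts P"
    using covered_Diff[of K "{P}"] fam K(2) cov by (auto simp: path_families_def covered_def)
  moreover have "K - {P} \<in> path_families t (A \<union> B - pverts P)"
    using path_families_subset[OF fam, of "K - {P}"] fam disj by (auto simp: path_families_def)
  moreover have "card (pverts Q \<inter> (B - {b})) = 1" if "Q \<in> K - {P}" for Q
  proof -
    have "pverts Q \<inter> (B - {b}) = pverts Q \<inter> B" using disj[OF that] P(2) by blast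
    then show ?thesis using one[of Q] that by simp
  qed
  ultimately show ?thesis by (simp add: transversal_covers_def path_covers_def rest)
qed

lemma transversal_cover_insert_path:
  assumes AB: "A \<inter> B = {}" and b: "b \<in> B"
    and P: "P \<in> paths t" "pverts P \<subseteq> insert b A" "b \<in> pverts P"
    and K: "K \<in> transversal_covers t (A - pverts P) (B - {b})"
  shows "insert P K \<in> transversal_covers t A B" "P \<notin> K"
proof -
  have fam: "K \<in> path_families t (A - pverts P \<union> (B - {b}))"
    and cov: "covered K = A - pverts P \<union> (B - {b})"
    and one: "\<And>Q. Q \<in> K \<Longrightarrow> card (pverts Q \<inter> (B - {b})) = 1"
    using K by (auto simp: transversal_covers_def path_covers_def)
  have inside: "pverts Q \<subseteq> A - pverts P \<union> (B - {b})" if "Q \<in> K" for Q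
    using fam that by (auto simp: path_families_def)
  show notin: "P \<notin> K"
    using inside[of P] P pverts_nonempty by blast
  have PB: "pverts P \<inter> B = {b}" using AB P b by blast
  have "disjoint_family_on pverts (insert P K)"
    using fam notin cov PB by (auto simp: disjoint_family_on_insert path_families_def covered_def)
  moreover have "covered (insert P K) = A \<union> B" using cov P b by (auto simp: covered_insert)
  moreover have "card (pverts Q \<inter> B) = 1" if "Q \<in> insert P K" for Q
  proof (cases "Q = P")
    case False
    then have "Q \<in> K" using that by blast
    moreover have "pverts Q \<inter> B = pverts Q \<inter> (B - {b})" using inside[OF \<open>Q \<in> K\<close>] P(3) by blast
    ultimately show ?thesis using one by simp
  qed (simp add: PB)
  moreover have "\<forall>Q\<in>insert P K. pverts Q \<subseteq> A \<union> B" using inside P b by blast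
  ultimately show "insert P K \<in> transversal_covers t A B"
    using fam P(1) by (simp add: transversal_covers_def path_covers_def path_families_def)
qed

lemma card_transversal_covers_through:
  assumes AB: "A \<inter> B = {}" and b: "b \<in> B"
    and P: "P \<in> paths t" "pverts P \<subseteq> insert b A" "b \<in> pverts P"
  shows "card {K \<in> transversal_covers t A B. P \<in> K} = card (transversal_covers t (A - pverts P) (B - {b}))"
proof (rule bij_betw_same_card[OF bij_betw_byWitness[where f = "\<lambda>K. K - {P}" and f' = "insert P"]])
  show "\<forall>K\<in>{K \<in> transversal_covers t A B. P \<in> K}. insert P (K - {P}) = K" by auto
  show "\<forall>K\<in>transversal_covers t (A - pverts P) (B - {b}). insert P K - {P} = K"
    using transversal_cover_insert_path(2)[OF AB b P] by auto
  show "(\<lambda>K. K - {P}) ` {K \<in> transversal_covers t A B. P \<in> K}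
      \<subseteq> transversal_covers t (A - pverts P) (B - {b})"
    using transversal_cover_remove_path[OF AB b P(2,3)] by auto
  show "insert P ` transversal_covers t (A - pverts P) (B - {b}) \<subseteq> {K \<in> transversal_covers t A B. P \<in> K}"
    using transversal_cover_insert_path(1)[OF AB b P] by auto
qed

lemma card_transversal_covers_by_path:
  assumes AB: "A \<inter> B = {}" "finite A" "finite B" and b: "b \<in> B"
  shows "card (transversal_covers t A B)
       = (\<Sum>P\<in>{P \<in> paths t. pverts P \<subseteq> insert b A \<and> b \<in> pverts P}. card {K \<in> transversal_covers t A B. P \<in> K})"
proof -
  define Pb where "Pb = {P \<in> paths t. pverts P \<subseteq> insert b A \<and> b \<in> pverts P}"
  define S where "S P = {K \<in> transversal_covers t A B. P \<in> K}" for P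
  have finPb: "finite Pb"
  proof -
    have "Pb \<subseteq> Pow (Pow (insert b A))" unfolding Pb_def pverts_def by auto
    then show ?thesis using AB by (meson finite_Pow_iff finite_insert finite_subset)
  qed
  have finS: "finite (S P)" for P
    using finite_path_covers[of "A \<union> B" t] AB by (auto simp: S_def transversal_covers_def)
  have eq: "transversal_covers t A B = (\<Union>P\<in>Pb. S P)"
  proof (intro equalityI subsetI)
    fix K assume K: "K \<in> transversal_covers t A B"
    then have "b \<in> covered K" using b by (simp add: transversal_covers_def path_covers_def)
    then obtain P where P: "P \<in> K" "b \<in> pverts P" unfolding covered_def by blast
    have "P \<in> paths t" "pverts P \<subseteq> A \<union> B" "card (pverts P \<inter> B) = 1"
      using K P(1) by (auto simp: transversal_covers_def path_covers_def path_families_def)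
    moreover have "pverts P \<inter> B = {b}"
      using \<open>card (pverts P \<inter> B) = 1\<close> P(2) b by (metis IntI card_1_singletonE singletonD)
    ultimately have "P \<in> Pb" using P(2) unfolding Pb_def by blast
    then show "K \<in> (\<Union>P\<in>Pb. S P)" using K P(1) unfolding S_def by blast
  qed (auto simp: S_def)
  have disj: "S P \<inter> S Q = {}" if PQ: "P \<in> Pb" "Q \<in> Pb" "P \<noteq> Q" for P Q
  proof -
    have "False" if K: "K \<in> transversal_covers t A B" "P \<in> K" "Q \<in> K" for K
    proof -
      have "disjoint_family_on pverts K"
        using K(1) by (simp add: transversal_covers_def path_covers_def path_families_def)
      then have "pverts P \<inter> pverts Q = {}" using K(2,3) PQ(3) by (rule disjoint_family_onD)
      then show False using PQ(1,2) unfolding Pb_def by blast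
    qed
    then show ?thesis unfolding S_def by blast
  qed
  have "card (transversal_covers t A B) = card (\<Union>P\<in>Pb. S P)" using eq by (rule arg_cong)
  also have "\<dots> = (\<Sum>P\<in>Pb. card (S P))"
    using finPb finS disj by (intro card_UN_disjoint) auto
  finally show ?thesis unfolding Pb_def S_def .
qed

text \<open>The number of transversal covers when |A| = t|B|, by induction on |B|: choose the
  path through a fixed vertex of B, then cover the rest.\<close>
lemma card_transversal_covers:
  assumes "finite A" "finite B" "A \<inter> B = {}" "card A = t * card B"
  shows "real (card (transversal_covers t A B)) = ((real t + 1) / 2) ^ card B * fact (t * card B)"
  using assms
proof (induction "card B" arbitrary: A B)
  case 0
  then have "A = {}" "B = {}" by auto
  then show ?case by (simp add: transversal_covers_def path_covers_empty)
next
  case (Suc k)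
  note AB = Suc.prems(3,1,2)
  obtain b where b: "b \<in> B" using Suc.hyps(2) by fastforce
  have bA: "b \<notin> A" using AB b by blast
  define Pb where "Pb = {P \<in> paths t. pverts P \<subseteq> insert b A \<and> b \<in> pverts P}"
  have count: "real (card {K \<in> transversal_covers t A B. P \<in> K}) = ((real t + 1) / 2) ^ k * fact (t * k)"
    if P: "P \<in> Pb" for P
  proof -
    have cP: "card (pverts P) = Suc t" "finite (pverts P)" using P card_pverts unfolding Pb_def by auto
    have "A \<inter> pverts P = pverts P - {b}" using P bA unfolding Pb_def by blast
    moreover have "card (pverts P - {b}) = t" using cP P unfolding Pb_def by simp
    ultimately have "card (A - pverts P) = t * k"
      using cP Suc.prems(4) Suc.hyps(2)[symmetric] card_Diff_subset_Int[of A "pverts P"] AB by simp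
    moreover have "card (B - {b}) = k" using Suc.hyps(2) b AB by simp
    ultimately show ?thesis
      using Suc.hyps(1)[of "B - {b}" "A - pverts P"] AB P
        card_transversal_covers_through[OF AB(1) b] unfolding Pb_def by auto
  qed
  have "real (card (transversal_covers t A B)) = (\<Sum>P\<in>Pb. real (card {K \<in> transversal_covers t A B. P \<in> K}))"
    unfolding Pb_def card_transversal_covers_by_path[OF AB b] by (simp add: of_nat_sum)
  also have "\<dots> = real (card Pb) * (((real t + 1) / 2) ^ k * fact (t * k))" by (simp add: count)
  also have "\<dots> = ((real t + 1) / 2) ^ Suc k * fact (t * Suc k)"
  proof (rule transversal_count_step)
    have "card A = t * k + t" using Suc.prems(4) Suc.hyps(2)[symmetric] by simp
    then show "2 * card Pb = ((t * k + t) choose t) * fact (Suc t)"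
      using card_paths_through[OF AB(2) bA] unfolding Pb_def by simp
  qed
  finally show ?case using Suc.hyps(2) by simp
qed

end

theorem mainTheorem13:
  fixes t n :: nat
  assumes "t \<ge> 1"
  shows "(\<forall>m. m > n * t \<longrightarrow> LH t (Hpoly t m * Hpoly t n) = 0)
       \<and> LH t (Hpoly t (n * t) * Hpoly t n) = ((real t + 1) / 2) ^ n * fact (n * t)"
proof -
  define A where "A m = {0..<m}" for m :: nat
  define B where "B m = {m..<m + n}" for m
  have AB: "A m \<inter> B m = {}" "finite (A m)" "finite (B m)" "card (A m) = m" "card (B m) = n" for m
    by (auto simp: A_def B_def)
  have L: "LH t (Hpoly t m * Hpoly t n) = real (card (crossing_covers t (A m) (B m)))" for m
    using LH_Hpoly_product_crossing[OF assms AB(1-3)] by (simp add: AB(4,5))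
  have vanish: "crossing_covers t (A m) (B m) = {}" if m: "m > n * t" for m
  proof (rule equals0I)
    fix K assume K: "K \<in> crossing_covers t (A m) (B m)"
    have "Suc t * card K = m + n" "card K \<le> n"
      using crossing_covers_card[OF assms AB(1-3) K] by (simp_all add: AB(4,5))
    then have "m + n \<le> Suc t * n" by (metis mult_le_mono2)
    then show False using m by (simp add: algebra_simps)
  qed
  have "LH t (Hpoly t (n * t) * Hpoly t n) = real (card (transversal_covers t (A (n * t)) (B (n * t))))"
    using L[of "n * t"] crossing_eq_transversal[OF assms AB(1-3)] by (simp add: AB(4,5) mult.commute)
  also have "\<dots> = ((real t + 1) / 2) ^ n * fact (n * t)"
    using card_transversal_covers[OF assms AB(2,3,1), of "n * t"] by (simp add: AB(4,5) mult.commute)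
  finally show ?thesis using L vanish by simp
qed

end
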